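(* Let $V$ be the value function defined in the context (the limit of relative value iteration). For any $\mathbf Q^1,\mathbf Q^2\in\mathcal Q$ with $\mathbf Q^2\succeq\mathbf Q^1$ (componentwise $\ge$), we have $V(\mathbf Q^2)\ge V(\mathbf Q^1)$.
   Context: Model. Let $N\ge 1$, $\mathcal N=\{0,1,\dots,N\}$ (base station $0$ is the macro base station, MBS) and $\mathcal N^+=\{1,\dots,N\}$ (small base stations, SBSs). Let $\mathcal M=\{1,\dots,M\}$ be the set of contents. For each $n\in\mathcal N$ let $\mathcal M_n\subseteq\mathcal M$ be the set of contents cached at BS $n$, with $\mathcal M_0=\mathcal M$; put $\tilde{\mathcal M}_n=\mathcal M_n\cup\{0\}$ and $\mathcal N_m=\{n\in\mathcal N^+: m\in\mathcal M_n\}$. Powers $p(n,m)\ge 0$ are given for $n\in\mathcal N$, $m\in\mathcal M_n$, and $p(n,0)=0$. A weight $w\ge 0$ is fixed. The feasible action space is $\mathcal U=\{\mathbf u=(u_n)_{n\in\mathcal N}: u_n\in\tilde{\mathcal M}_n\ \forall n,\ u_0\sum_{n\in\mathcal N^+}u_n=0\}$. A state is $\mathbf Q=(Q_{n,m})_{n\in\mathcal N,m\in\mathcal M_n}$ with $Q_{n,m}\in\mathcal Q_{n,m}=\{0,1,\dots,N_{n,m}\}$ for given positive integers $N_{n,m}$; $\mathcal Q=\prod_{n\in\mathcal N}\prod_{m\in\mathcal M_n}\mathcal Q_{n,m}$. Arrivals $A_{n,m}$ ($n\in\mathcal N$, $m\in\mathcal M$) are mutually independent nonnegative-integer random variables with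 fixed distributions, i.i.d. across time slots; $\tilde A_{0,m}=A_{0,m}+\sum_{n\in\mathcal N^+\setminus\mathcal N_m}A_{n,m}$. Given state $\mathbf Q$ and action $\mathbf u$, the next state $\mathbf Q'$ is $Q'_{0,m}=\min\{\mathbf 1(u_0\neq m)Q_{0,m}+\tilde A_{0,m},N_{0,m}\}$ for $m\in\mathcal M_0$ and $Q'_{n,m}=\min\{\mathbf 1(u_0\neq m\text{ and }u_n\neq m)Q_{n,m}+A_{n,m},N_{n,m}\}$ for $n\in\mathcal N^+$, $m\in\mathcal M_n$; $\mathbb E$ denotes expectation over the arrivals. The per-stage cost is $g(\mathbf Q,\mathbf u)=d(\mathbf Q)+w\,p(\mathbf u)$ with $d(\mathbf Q)=\sum_{n\in\mathcal N}\sum_{m\in\mathcal M_n}Q_{n,m}$ and $p(\mathbf u)=\sum_{n\in\mathcal N}p(n,u_n)$. Value function. Fix a reference state $\mathbf Q^\dagger\in\mathcal Q$. Relative value iteration: $V_0\equiv 0$, $J_{l+1}(\mathbf Q,\mathbf u)=g(\mathbf Q,\mathbf u)+\mathbb E[V_l(\mathbf Q')]$, and $V_{l+1}(\mathbf Q)=\min_{\mathbf u\in\mathcal U}J_{l+1}(\mathbf Q,\mathbf u)-\min_{\mathbf u\in\mathcal U}J_{l+1}(\mathbf Q^\dagger,\mathbf u)$ for $l\ge0$. It is assumed (standing assumption of the paper, guaranteed under its unichain conditions) that $V_l$ converges pointwise to a function $V:\mathcal Q\to\mathbb R$; this $V$ is the value function, which solves the Bellman equation $\theta+V(\mathbf Q)=\min_{\mathbf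 u\in\mathcal U}\{g(\mathbf Q,\mathbf u)+\mathbb E[V(\mathbf Q')]\}$ for all $\mathbf Q$. *)

theory Defs
  imports "HOL-Probability.Probability"
begin

text \<open>Base stations are 0..N (0 = MBS), contents are 1..M. Mc n is the cache set of BS n.
  Actions are functions u :: nat => nat (u n for n <= N; 0 = idle), states are
  functions Q :: nat => nat => nat (Q n m for n <= N, m in Mc n); outside the meaningful
  index range both are fixed to 0 so that the action and state spaces are finite.\<close>

definition Acts :: "nat \<Rightarrow> (nat \<Rightarrow> nat set) \<Rightarrow> (nat \<Rightarrow> nat) set" where
  "Acts N Mc = {u. (\<forall>n\<le>N. u n \<in> Mc n \<union> {0}) \<and> (\<forall>n>N. u n = 0)
                   \<and> u 0 * (\<Sum>n\<in>{1..N}. u n) = 0}"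

definition States :: "nat \<Rightarrow> (nat \<Rightarrow> nat set) \<Rightarrow> (nat \<Rightarrow> nat \<Rightarrow> nat) \<Rightarrow> (nat \<Rightarrow> nat \<Rightarrow> nat) set" where
  "States N Mc Nb = {Q. (\<forall>n m. n \<le> N \<and> m \<in> Mc n \<longrightarrow> Q n m \<le> Nb n m)
                      \<and> (\<forall>n m. \<not> (n \<le> N \<and> m \<in> Mc n) \<longrightarrow> Q n m = 0)}"

definition arrivals :: "nat \<Rightarrow> nat \<Rightarrow> (nat \<Rightarrow> nat \<Rightarrow> nat pmf) \<Rightarrow> (nat \<times> nat \<Rightarrow> nat) pmf" where
  "arrivals N M Adist = Pi_pmf ({0..N} \<times> {1..M}) 0 (\<lambda>(n, m). Adist n m)"

definition Atil :: "nat \<Rightarrow> (nat \<Rightarrow> nat set) \<Rightarrow> (nat \<times> nat \<Rightarrow> nat) \<Rightarrow> nat \<Rightarrow> nat" where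
  "Atil N Mc A m = A (0, m) + (\<Sum>n\<in>{n\<in>{1..N}. m \<notin> Mc n}. A (n, m))"

definition nxt :: "nat \<Rightarrow> (nat \<Rightarrow> nat set) \<Rightarrow> (nat \<Rightarrow> nat \<Rightarrow> nat) \<Rightarrow> (nat \<Rightarrow> nat \<Rightarrow> nat)
                   \<Rightarrow> (nat \<Rightarrow> nat) \<Rightarrow> (nat \<times> nat \<Rightarrow> nat) \<Rightarrow> (nat \<Rightarrow> nat \<Rightarrow> nat)" where
  "nxt N Mc Nb Q u A = (\<lambda>n m.
     if n = 0 \<and> m \<in> Mc 0 then min ((if u 0 \<noteq> m then Q 0 m else 0) + Atil N Mc A m) (Nb 0 m)
     else if 1 \<le> n \<and> n \<le> N \<and> m \<in> Mc n then
       min ((if u 0 \<noteq> m \<and> u n \<noteq> m then Q n m else 0) + A (n, m)) (Nb n m)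
     else 0)"

definition dcost :: "nat \<Rightarrow> (nat \<Rightarrow> nat set) \<Rightarrow> (nat \<Rightarrow> nat \<Rightarrow> nat) \<Rightarrow> real" where
  "dcost N Mc Q = real (\<Sum>n\<le>N. \<Sum>m\<in>Mc n. Q n m)"

definition pcost :: "nat \<Rightarrow> (nat \<Rightarrow> nat \<Rightarrow> real) \<Rightarrow> (nat \<Rightarrow> nat) \<Rightarrow> real" where
  "pcost N p u = (\<Sum>n\<le>N. p n (u n))"

definition stage_cost :: "nat \<Rightarrow> (nat \<Rightarrow> nat set) \<Rightarrow> (nat \<Rightarrow> nat \<Rightarrow> real) \<Rightarrow> real
                          \<Rightarrow> (nat \<Rightarrow> nat \<Rightarrow> nat) \<Rightarrow> (nat \<Rightarrow> nat) \<Rightarrow> real" where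
  "stage_cost N Mc p w Q u = dcost N Mc Q + w * pcost N p u"

primrec rvi :: "nat \<Rightarrow> nat \<Rightarrow> (nat \<Rightarrow> nat set) \<Rightarrow> (nat \<Rightarrow> nat \<Rightarrow> nat) \<Rightarrow> (nat \<Rightarrow> nat \<Rightarrow> nat pmf)
                \<Rightarrow> (nat \<Rightarrow> nat \<Rightarrow> real) \<Rightarrow> real \<Rightarrow> (nat \<Rightarrow> nat \<Rightarrow> nat) \<Rightarrow> nat
                \<Rightarrow> (nat \<Rightarrow> nat \<Rightarrow> nat) \<Rightarrow> real" where
  "rvi N M Mc Nb Adist p w Qd 0 = (\<lambda>Q. 0)"
| "rvi N M Mc Nb Adist p w Qd (Suc l) =
     (let J = (\<lambda>Q u. stage_cost N Mc p w Q u
                 + measure_pmf.expectation (arrivals N M Adist)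
                     (\<lambda>A. rvi N M Mc Nb Adist p w Qd l (nxt N Mc Nb Q u A)))
      in (\<lambda>Q. Min (J Q ` Acts N Mc) - Min (J Qd ` Acts N Mc)))"

end

theory Submission
  imports Defs
begin

text \<open>Each relative value iterate is monotone in the state, by induction on the iteration:
  for a fixed action the stage cost is monotone in the queue lengths, and with the same
  arrivals the successor state is monotone as well, since serving a queue empties it in both
  states and buffer truncation is monotone. Taking expectations and then the minimum over the
  common finite action set preserves the order, and so does the limit.\<close>

definition state_le :: "nat \<Rightarrow> (nat \<Rightarrow> nat set) \<Rightarrow> (nat \<Rightarrow> nat \<Rightarrow> nat) \<Rightarrow> (nat \<Rightarrow> nat \<Rightarrow> nat) \<Rightarrow> bool"
  where "state_le N Mc Q1 Q2 \<longleftrightarrow> (\<forall>n\<le>N. \<forall>m\<in>Mc n. Q1 n m \<le> Q2 n m)"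

lemma Min_image_mono:
  fixes f g :: "'a \<Rightarrow> 'b::linorder"
  assumes "finite A" "A \<noteq> {}" "\<And>x. x \<in> A \<Longrightarrow> f x \<le> g x"
  shows "Min (f ` A) \<le> Min (g ` A)"
proof -
  have "Min (g ` A) \<in> g ` A" using assms(1,2) by (intro Min_in) auto
  then obtain x where x: "x \<in> A" "Min (g ` A) = g x" by blast
  have "Min (f ` A) \<le> f x" using assms(1) x(1) by simp
  also have "\<dots> \<le> g x" using assms(3) x(1) .
  finally show ?thesis using x(2) by simp
qed

lemma integrable_pmf_comp_finite_range:
  fixes f :: "'b \<Rightarrow> real"
  assumes "finite S" "\<And>x. g x \<in> S"
  shows "integrable (measure_pmf P) (\<lambda>x. f (g x))"
proof (rule measure_pmf.integrable_const_bound[where B = "\<Sum>s\<in>S. \<bar>f s\<bar>"])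
  have "\<bar>f (g x)\<bar> \<le> (\<Sum>s\<in>S. \<bar>f s\<bar>)" for x
    using member_le_sum[OF assms(2) _ assms(1), where f = "\<lambda>s. \<bar>f s\<bar>"] by simp
  then show "AE x in measure_pmf P. norm (f (g x)) \<le> (\<Sum>s\<in>S. \<bar>f s\<bar>)" by simp
qed simp

lemma finite_States:
  assumes "\<forall>n\<le>N. finite (Mc n)"
  shows "finite (States N Mc Nb)"
proof -
  define C where "C = (\<Union>n\<le>N. Mc n)"
  define K where "K = (\<Sum>(n, m)\<in>(SIGMA n:{..N}. Mc n). Nb n m)"
  define F where "F = {f. \<forall>m. (m \<in> C \<longrightarrow> f m \<in> {..K}) \<and> (m \<notin> C \<longrightarrow> f m = 0)}"
  have fin_Sigma: "finite (SIGMA n:{..N}. Mc n)" using assms by auto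
  have "finite C" unfolding C_def using assms by auto
  then have "finite F" unfolding F_def by (intro finite_set_of_finite_funs) auto
  then have "finite {Q. \<forall>n. (n \<in> {..N} \<longrightarrow> Q n \<in> F) \<and> (n \<notin> {..N} \<longrightarrow> Q n = (\<lambda>_. 0))}"
    by (intro finite_set_of_finite_funs) auto
  moreover have "States N Mc Nb \<subseteq> {Q. \<forall>n. (n \<in> {..N} \<longrightarrow> Q n \<in> F) \<and> (n \<notin> {..N} \<longrightarrow> Q n = (\<lambda>_. 0))}"
  proof (intro subsetI CollectI allI conjI impI)
    fix Q n assume Q: "Q \<in> States N Mc Nb"
    show "Q n = (\<lambda>_. 0)" if "n \<notin> {..N}" using Q that unfolding States_def by auto
    assume "n \<in> {..N}"
    have "Q n m \<le> K" if "m \<in> Mc n" for m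
    proof -
      have "Q n m \<le> Nb n m" using Q that \<open>n \<in> {..N}\<close> unfolding States_def by auto
      also have "\<dots> \<le> K"
        unfolding K_def using member_le_sum[of "(n, m)" _ "\<lambda>(n, m). Nb n m"] fin_Sigma that \<open>n \<in> {..N}\<close>
        by auto
      finally show ?thesis .
    qed
    then show "Q n \<in> F" using Q \<open>n \<in> {..N}\<close> unfolding F_def C_def States_def by fastforce
  qed
  ultimately show ?thesis by (rule finite_subset[rotated])
qed

lemma finite_Acts:
  assumes "\<forall>n\<le>N. Mc n \<subseteq> {1..M}"
  shows "finite (Acts N Mc)"
proof -
  have "Acts N Mc \<subseteq> {u. \<forall>n. (n \<in> {..N} \<longrightarrow> u n \<in> {..M}) \<and> (n \<notin> {..N} \<longrightarrow> u n = 0)}"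
  proof (intro subsetI CollectI allI conjI impI)
    fix u n assume u: "u \<in> Acts N Mc"
    show "u n = 0" if "n \<notin> {..N}" using u that unfolding Acts_def by simp
    assume "n \<in> {..N}"
    then have "u n \<in> Mc n \<union> {0}" and "Mc n \<subseteq> {1..M}" using u assms unfolding Acts_def by auto
    then show "u n \<in> {..M}" by auto
  qed
  moreover have "finite {u. \<forall>n. (n \<in> {..N} \<longrightarrow> u n \<in> {..M}) \<and> (n \<notin> {..N} \<longrightarrow> u n = (0::nat))}"
    by (intro finite_set_of_finite_funs) auto
  ultimately show ?thesis by (rule finite_subset)
qed

lemma Acts_nonempty: "Acts N Mc \<noteq> {}"
proof -
  have "(\<lambda>_. 0) \<in> Acts N Mc" unfolding Acts_def by auto
  then show ?thesis by blast
qed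

lemma nxt_in_States: "nxt N Mc Nb Q u A \<in> States N Mc Nb"
  unfolding States_def nxt_def by auto

lemma nxt_mono:
  assumes "state_le N Mc Q1 Q2"
  shows "state_le N Mc (nxt N Mc Nb Q1 u A) (nxt N Mc Nb Q2 u A)"
  unfolding state_le_def
proof (intro allI impI ballI)
  fix n m assume "n \<le> N" and "m \<in> Mc n"
  then have "Q1 n m \<le> Q2 n m" using assms unfolding state_le_def by blast
  then show "nxt N Mc Nb Q1 u A n m \<le> nxt N Mc Nb Q2 u A n m"
    using \<open>n \<le> N\<close> \<open>m \<in> Mc n\<close> unfolding nxt_def by (cases "n = 0") (simp_all add: min_def)
qed

lemma stage_cost_mono:
  assumes "state_le N Mc Q1 Q2"
  shows "stage_cost N Mc p w Q1 u \<le> stage_cost N Mc p w Q2 u"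
proof -
  have "(\<Sum>n\<le>N. \<Sum>m\<in>Mc n. Q1 n m) \<le> (\<Sum>n\<le>N. \<Sum>m\<in>Mc n. Q2 n m)"
    using assms unfolding state_le_def by (intro sum_mono) auto
  then have "dcost N Mc Q1 \<le> dcost N Mc Q2" unfolding dcost_def by (simp only: of_nat_le_iff)
  then show ?thesis unfolding stage_cost_def by simp
qed

lemma rvi_mono:
  assumes "\<forall>n\<le>N. Mc n \<subseteq> {1..M}"
    and "Q1 \<in> States N Mc Nb" "Q2 \<in> States N Mc Nb" "state_le N Mc Q1 Q2"
  shows "rvi N M Mc Nb Adist p w Qd l Q1 \<le> rvi N M Mc Nb Adist p w Qd l Q2"
  using assms(2-4)
proof (induction l arbitrary: Q1 Q2)
  case 0
  then show ?case by simp
next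
  case (Suc l)
  let ?P = "measure_pmf (arrivals N M Adist)"
  let ?r = "rvi N M Mc Nb Adist p w Qd l"
  define J where "J = (\<lambda>Q u. stage_cost N Mc p w Q u
                 + measure_pmf.expectation (arrivals N M Adist) (\<lambda>A. ?r (nxt N Mc Nb Q u A)))"
  have fin_States: "finite (States N Mc Nb)"
    using assms(1) by (intro finite_States) (meson finite_atLeastAtMost finite_subset)
  have "J Q1 u \<le> J Q2 u" for u
  proof -
    have "stage_cost N Mc p w Q1 u \<le> stage_cost N Mc p w Q2 u"
      using Suc.prems(3) by (rule stage_cost_mono)
    moreover have "integral\<^sup>L ?P (\<lambda>A. ?r (nxt N Mc Nb Q1 u A)) \<le> integral\<^sup>L ?P (\<lambda>A. ?r (nxt N Mc Nb Q2 u A))"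
      using fin_States Suc.IH[OF nxt_in_States nxt_in_States nxt_mono[OF Suc.prems(3)]]
      by (intro integral_mono integrable_pmf_comp_finite_range[OF _ nxt_in_States])
    ultimately show ?thesis unfolding J_def by simp
  qed
  then have "Min (J Q1 ` Acts N Mc) \<le> Min (J Q2 ` Acts N Mc)"
    using finite_Acts[OF assms(1)] Acts_nonempty by (intro Min_image_mono)
  then show ?case by (simp add: J_def Let_def)
qed

theorem lemma2:
  fixes N M :: nat and Mc :: "nat \<Rightarrow> nat set" and Nb :: "nat \<Rightarrow> nat \<Rightarrow> nat"
    and Adist :: "nat \<Rightarrow> nat \<Rightarrow> nat pmf" and p :: "nat \<Rightarrow> nat \<Rightarrow> real" and w :: real
    and Qd :: "nat \<Rightarrow> nat \<Rightarrow> nat" and V :: "(nat \<Rightarrow> nat \<Rightarrow> nat) \<Rightarrow> real"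
    and Q1 Q2 :: "nat \<Rightarrow> nat \<Rightarrow> nat"
  assumes "N \<ge> 1"
    and "Mc 0 = {1..M}"
    and "\<forall>n\<le>N. Mc n \<subseteq> {1..M}"
    and "\<forall>n\<le>N. \<forall>m\<in>Mc n. Nb n m > 0"
    and "\<forall>n\<le>N. \<forall>m\<in>Mc n. p n m \<ge> 0"
    and "\<forall>n\<le>N. p n 0 = 0"
    and "w \<ge> 0"
    and "Qd \<in> States N Mc Nb"
    and "\<forall>Q\<in>States N Mc Nb. (\<lambda>l. rvi N M Mc Nb Adist p w Qd l Q) \<longlonglongrightarrow> V Q"
    and "Q1 \<in> States N Mc Nb" and "Q2 \<in> States N Mc Nb"
    and "\<forall>n\<le>N. \<forall>m\<in>Mc n. Q1 n m \<le> Q2 n m"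
  shows "V Q2 \<ge> V Q1"
proof (rule LIMSEQ_le)
  show "(\<lambda>l. rvi N M Mc Nb Adist p w Qd l Q1) \<longlonglongrightarrow> V Q1" using assms(9,10) by blast
  show "(\<lambda>l. rvi N M Mc Nb Adist p w Qd l Q2) \<longlonglongrightarrow> V Q2" using assms(9,11) by blast
  have "state_le N Mc Q1 Q2" using assms(12) unfolding state_le_def .
  then show "\<exists>l0. \<forall>l\<ge>l0. rvi N M Mc Nb Adist p w Qd l Q1 \<le> rvi N M Mc Nb Adist p w Qd l Q2"
    using rvi_mono[OF assms(3,10,11)] by blast
qed

end
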